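(* Let $n\ge1$ and $\gamma\in PSL(n+1,\mathbb{C})$ have a lift $\widetilde\gamma\in SL(n+1,\mathbb{C})$ which is diagonalizable and all of whose eigenvalues have modulus $1$. Then $\Lambda_{Kul}(\langle\gamma\rangle)=\emptyset$ if $\gamma$ has finite order, and $\Lambda_{Kul}(\langle\gamma\rangle)=\mathbb{P}^n_{\mathbb{C}}$ if $\gamma$ has infinite order.
   Context: For $\Gamma\subset PSL(n+1,\mathbb{C})$: a cluster point of $\Gamma z$ is a limit of $g_mz$ with pairwise distinct $g_m\in\Gamma$; $\Lambda(\Gamma)$ is the closure of the union of cluster points of $\Gamma z$ over all $z$; $L_2(\Gamma)$ is the closure of the union, over compact $K\subset\mathbb{P}^n_{\mathbb{C}}\setminus\Lambda(\Gamma)$, of cluster points of $\Gamma K$ (limits of $g_mk_m$, $g_m$ pairwise distinct, $k_m\in K$); $\Lambda_{Kul}(\Gamma)=\Lambda(\Gamma)\cup L_2(\Gamma)$. *)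

theory Defs
  imports "HOL-Analysis.Analysis"
begin

(* Complex projective space P^n_C, with C^{n+1} = complex^'n  (so n+1 = CARD('n)).
   A point of P^n is a complex line through 0, i.e. the set of complex multiples of a
   nonzero vector. *)

definition cline :: "complex^'n \<Rightarrow> (complex^'n) set" where
  "cline v = {c *s v | c. True}"

definition projspace :: "(complex^'n) set set" where
  "projspace = {cline v | v. v \<noteq> 0}"

(* quotient topology of (C^{n+1} - {0}) -> P^n *)
definition proj_topology :: "(complex^'n) set topology" where
  "proj_topology = topology (\<lambda>U. U \<subseteq> projspace \<and> open {v. v \<noteq> 0 \<and> cline v \<in> U})"

primrec mpow :: "complex^'n^'n \<Rightarrow> nat \<Rightarrow> complex^'n^'n" where
  "mpow A 0 = mat 1"
| "mpow A (Suc k) = A ** mpow A k"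

definition mzpow :: "complex^'n^'n \<Rightarrow> int \<Rightarrow> complex^'n^'n" where
  "mzpow A k = (if 0 \<le> k then mpow A (nat k) else mpow (matrix_inv A) (nat (- k)))"

(* PSL(n+1,C): classes of SL(n+1,C) modulo the centre {c I | c^(n+1) = 1} *)
definition psl_class :: "complex^'n^'n \<Rightarrow> (complex^'n^'n) set" where
  "psl_class M = {mat c ** M | c. c ^ CARD('n) = 1}"

definition PSL :: "(complex^'n^'n) set set" where
  "PSL = {psl_class M | M. det M = 1}"

definition psl_lift :: "(complex^'n^'n) set \<Rightarrow> complex^'n^'n" where
  "psl_lift g = (SOME M. det M = 1 \<and> psl_class M = g)"

definition psl_one :: "(complex^'n^'n) set" where
  "psl_one = psl_class (mat 1)"

definition psl_zpow :: "(complex^'n^'n) set \<Rightarrow> int \<Rightarrow> (complex^'n^'n) set" where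
  "psl_zpow g k = psl_class (mzpow (psl_lift g) k)"

definition cyclic_subgroup :: "(complex^'n^'n) set \<Rightarrow> (complex^'n^'n) set set" where
  "cyclic_subgroup g = {psl_zpow g k | k. True}"

definition psl_finite_order :: "(complex^'n^'n) set \<Rightarrow> bool" where
  "psl_finite_order g \<longleftrightarrow> (\<exists>k::nat. k > 0 \<and> psl_class (mpow (psl_lift g) k) = psl_one)"

definition psl_act :: "(complex^'n^'n) set \<Rightarrow> (complex^'n) set \<Rightarrow> (complex^'n) set" where
  "psl_act g p = (\<lambda>v. (SOME M. M \<in> g) *v v) ` p"

definition cluster_points :: "(complex^'n^'n) set set \<Rightarrow> (complex^'n) set set \<Rightarrow> (complex^'n) set set" where
  "cluster_points \<Gamma> K = {p. \<exists>g k. (\<forall>m. g m \<in> \<Gamma>) \<and> inj g \<and> (\<forall>m. k m \<in> K) \<and>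
       limitin proj_topology (\<lambda>m. psl_act (g m) (k m)) p sequentially}"

definition Lambda_set :: "(complex^'n^'n) set set \<Rightarrow> (complex^'n) set set" where
  "Lambda_set \<Gamma> = proj_topology closure_of (\<Union>z\<in>projspace. cluster_points \<Gamma> {z})"

definition L2_set :: "(complex^'n^'n) set set \<Rightarrow> (complex^'n) set set" where
  "L2_set \<Gamma> = proj_topology closure_of
     (\<Union>{cluster_points \<Gamma> K | K. compactin proj_topology K \<and> K \<subseteq> projspace - Lambda_set \<Gamma>})"

definition Kulkarni_limit_set :: "(complex^'n^'n) set set \<Rightarrow> (complex^'n) set set" where
  "Kulkarni_limit_set \<Gamma> = Lambda_set \<Gamma> \<union> L2_set \<Gamma>"

definition mat_diagonalizable :: "complex^'n^'n \<Rightarrow> bool" where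
  "mat_diagonalizable A \<longleftrightarrow> (\<exists>(P::complex^'n^'n) (D::complex^'n^'n). invertible P \<and> (\<forall>i j. i \<noteq> j \<longrightarrow> D $ i $ j = 0) \<and>
       A = P ** D ** matrix_inv P)"

definition mat_eigenvalue :: "complex^'n^'n \<Rightarrow> complex \<Rightarrow> bool" where
  "mat_eigenvalue A c \<longleftrightarrow> (\<exists>v. v \<noteq> 0 \<and> A *v v = c *s v)"

end

(*
  The powers of a diagonalizable matrix A with unimodular eigenvalues form a bounded set, since
  they are conjugate to powers of a diagonal unitary matrix. By compactness some subsequence
  A^(n_k) converges to a matrix E, invertible because |det A| = 1; choosing the n_k sparse
  enough, the gaps d_k = n_(k+1) - n_k increase strictly and A^(d_k) converges to the identity.
  If the class of A has infinite order in PSL, the classes of A^(d_k) are pairwise distinct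
  elements of the cyclic group moving every point z back to z, so every point is a cluster
  point of its own orbit and the limit set is all of projective space. If the order is finite,
  the cyclic group is finite and there are no cluster points at all.
*)

theory Submission
  imports Defs
begin

lemma matrix_inv_right: "invertible M \<Longrightarrow> M ** matrix_inv M = mat 1"
  and matrix_inv_left: "invertible M \<Longrightarrow> matrix_inv M ** M = mat 1"
  unfolding invertible_def matrix_inv_def by (metis (mono_tags, lifting) someI_ex)+

lemma matrix_inv_unique:
  assumes "(M::'a::semiring_1^'n^'n) ** X = mat 1" "X ** M = mat 1"
  shows "matrix_inv M = X"
proof -
  have inv: "invertible M" using assms unfolding invertible_def by blast
  have "matrix_inv M = matrix_inv M ** (M ** X)" by (simp add: assms)
  also have "\<dots> = X" by (simp add: matrix_mul_assoc matrix_inv_left[OF inv])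
  finally show ?thesis .
qed

lemma mat_matrix_mult: "mat c ** (X::'a::semiring_1^'m^'n) = (\<chi> i j. c * X$i$j)"
  by (simp add: matrix_matrix_mult_def mat_def vec_eq_iff if_distrib[where f="\<lambda>x. x * _"] cong: if_cong)

lemma matrix_mult_mat: "(X::'a::semiring_1^'n^'m) ** mat c = (\<chi> i j. X$i$j * c)"
  by (simp add: matrix_matrix_mult_def mat_def vec_eq_iff if_distrib[where f="\<lambda>x. _ * x"] cong: if_cong)

lemma matrix_mult_mat_commute: "(X::'a::comm_semiring_1^'n^'n) ** mat c = mat c ** X"
  unfolding mat_matrix_mult matrix_mult_mat by (simp add: mult.commute)

lemma mat_mult_mat: "mat a ** mat b = (mat (a * b) :: 'a::semiring_1^'n^'n)"
  unfolding mat_matrix_mult by (simp add: vec_eq_iff mat_def)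

lemma mat_matrix_vector_mult: "mat c *v (w::'a::semiring_1^'n) = c *s w"
  by (simp add: matrix_vector_mult_def mat_def vec_eq_iff if_distrib[where f="\<lambda>x. x * _"] cong: if_cong)

lemma mpow_add: "mpow A (a + b) = mpow A a ** mpow A b"
  by (induction a) (auto simp: matrix_mul_assoc)

lemma mpow_mult: "mpow A (a * b) = mpow (mpow A a) b"
  by (induction b) (auto simp: mpow_add)

lemma mpow_mat: "mpow (mat c) m = mat (c ^ m)"
  by (induction m) (auto simp: mat_mult_mat)

lemma mpow_mat_mult: "mpow (mat c ** A) m = mat (c ^ m) ** mpow A m"
proof (induction m)
  case (Suc m)
  have "mpow (mat c ** A) (Suc m) = mat c ** (A ** mat (c ^ m)) ** mpow A m"
    by (simp add: Suc matrix_mul_assoc)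
  also have "\<dots> = mat c ** mat (c ^ m) ** (A ** mpow A m)"
    by (simp only: matrix_mult_mat_commute[of A] matrix_mul_assoc)
  finally show ?case by (simp add: mat_mult_mat)
qed simp

lemma det_mpow: "det (mpow A m) = det A ^ m"
  by (induction m) (auto simp: det_mul)

lemma mpow_conjugate:
  assumes "invertible P"
  shows "mpow (P ** D ** matrix_inv P) m = P ** mpow D m ** matrix_inv P"
proof (induction m)
  case (Suc m)
  have "mpow (P ** D ** matrix_inv P) (Suc m) = P ** D ** (matrix_inv P ** P) ** mpow D m ** matrix_inv P"
    by (simp add: Suc matrix_mul_assoc)
  then show ?case by (simp add: matrix_inv_left[OF assms] matrix_mul_assoc)
qed (simp add: matrix_inv_right[OF assms])

lemma diagonal_mpow_nth:
  assumes "\<And>i j. i \<noteq> j \<Longrightarrow> D$i$j = 0"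
  shows "mpow D m $ i $ j = (if i = j then (D$i$i) ^ m else 0)"
proof (induction m arbitrary: i j)
  case (Suc m)
  have "mpow D (Suc m) $ i $ j = (\<Sum>k\<in>UNIV. D$i$k * mpow D m $ k $ j)"
    by (simp add: matrix_matrix_mult_def)
  also have "\<dots> = (\<Sum>k\<in>UNIV. if k = i then D$i$i * mpow D m $ i $ j else 0)"
    by (rule sum.cong) (auto simp: assms)
  finally show ?case by (simp add: Suc)
qed (simp add: mat_def)

section \<open>Bounded powers return close to the identity\<close>

lemma norm_vec_le_sum: "norm (x::'a::real_normed_vector^'n) \<le> (\<Sum>i\<in>UNIV. norm (x$i))"
  by (simp add: norm_vec_def L2_set_le_sum)

lemma norm_matrix_nth_le: "norm (M$i$j) \<le> norm (M::'a::real_normed_vector^'n^'m)"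
  using Finite_Cartesian_Product.norm_nth_le[of "M$i" j] Finite_Cartesian_Product.norm_nth_le[of M i]
  by linarith

lemma norm_matrix_le_entries:
  fixes M :: "'a::real_normed_vector^'n^'m"
  assumes "\<And>i j. norm (M$i$j) \<le> a"
  shows "norm M \<le> real CARD('m) * real CARD('n) * a"
proof -
  have "norm M \<le> (\<Sum>i\<in>UNIV. \<Sum>j\<in>UNIV. norm (M$i$j))"
    by (rule order.trans[OF norm_vec_le_sum sum_mono[OF norm_vec_le_sum]])
  also have "\<dots> \<le> (\<Sum>i\<in>(UNIV::'m set). \<Sum>j\<in>(UNIV::'n set). a)"
    by (intro sum_mono assms)
  finally show ?thesis by simp
qed

lemma norm_matrix_mult_le:
  fixes M :: "'a::real_normed_algebra_1^'n^'m" and N :: "'a^'p^'n"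
  shows "norm (M ** N) \<le> real CARD('m) * real CARD('p) * (real CARD('n) * (norm M * norm N))"
proof (rule norm_matrix_le_entries)
  fix i j
  have "norm ((M ** N)$i$j) \<le> (\<Sum>k\<in>UNIV. norm (M$i$k) * norm (N$k$j))"
    unfolding matrix_matrix_mult_def by (auto intro: norm_sum order.trans sum_mono norm_mult_ineq)
  also have "\<dots> \<le> (\<Sum>k\<in>(UNIV::'n set). norm M * norm N)"
    by (intro sum_mono mult_mono) (auto intro: norm_matrix_nth_le)
  finally show "norm ((M ** N)$i$j) \<le> real CARD('n) * (norm M * norm N)" by simp
qed

lemma mat_eigenvalue_diagonal_entry:
  assumes P: "invertible P" and D: "\<And>i j. i \<noteq> j \<Longrightarrow> D$i$j = 0"
    and A: "A = P ** D ** matrix_inv P"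
  shows "mat_eigenvalue A (D$i$i)"
proof -
  have De: "D *v axis i 1 = D$i$i *s axis i 1"
    by (auto simp: vec_eq_iff matrix_vector_mult_def axis_def D
        if_distrib[where f="\<lambda>x. _ * x"] cong: if_cong)
  have "A *v (P *v axis i 1) = P *v (D *v ((matrix_inv P ** P) *v axis i 1))"
    by (simp add: A matrix_vector_mul_assoc matrix_mul_assoc)
  also have "\<dots> = D$i$i *s (P *v axis i 1)"
    by (simp add: matrix_inv_left[OF P] De vector_scalar_commute)
  finally have "A *v (P *v axis i 1) = D$i$i *s (P *v axis i 1)" .
  moreover have "P *v axis i 1 \<noteq> 0"
    using inj_matrix_vector_mult[OF P] by (metis axis_eq_0_iff injD matrix_vector_mult_0_right one_neq_zero)
  ultimately show ?thesis unfolding mat_eigenvalue_def by blast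
qed

lemma bounded_matrix_mult_set:
  fixes S :: "('a::real_normed_algebra_1^'n^'m) set" and T :: "('a^'p^'n) set"
  assumes "bounded S" "bounded T"
  shows "bounded {X ** Y | X Y. X \<in> S \<and> Y \<in> T}"
proof -
  obtain a b where a: "\<And>X. X \<in> S \<Longrightarrow> norm X \<le> a" and b: "\<And>Y. Y \<in> T \<Longrightarrow> norm Y \<le> b"
    using assms unfolding bounded_iff by blast
  have "norm (X ** Y) \<le> real CARD('m) * real CARD('p) * (real CARD('n) * (a * b))"
    if "X \<in> S" "Y \<in> T" for X Y
  proof -
    have "norm X * norm Y \<le> a * b"
      using a[OF that(1)] b[OF that(2)] by (intro mult_mono) (auto intro: order.trans[OF norm_ge_zero])
    then show ?thesis
      by (intro order.trans[OF norm_matrix_mult_le] mult_left_mono) auto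
  qed
  then show ?thesis unfolding bounded_iff by blast
qed

lemma bounded_range_mpow:
  fixes A :: "complex^'n^'n"
  assumes "mat_diagonalizable A" "\<forall>c. mat_eigenvalue A c \<longrightarrow> cmod c = 1"
  shows "bounded (range (mpow A))"
proof -
  obtain P D :: "complex^'n^'n" where P: "invertible P" and D: "\<And>i j. i \<noteq> j \<Longrightarrow> D$i$j = 0"
    and A: "A = P ** D ** matrix_inv P"
    using assms(1) unfolding mat_diagonalizable_def by blast
  have "norm (mpow D m) \<le> real CARD('n) * real CARD('n) * 1" for m
    using assms(2) mat_eigenvalue_diagonal_entry[OF P D A]
    by (intro norm_matrix_le_entries) (simp add: diagonal_mpow_nth[OF D] norm_power)
  then have "bounded (range (mpow D))"
    unfolding bounded_iff by blast
  then have "bounded {X ** Y | X Y. X \<in> {P} \<and> Y \<in> range (mpow D)}"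
    by (intro bounded_matrix_mult_set) auto
  then have "bounded {X ** Y | X Y. X \<in> {P ** Z | Z. Z \<in> range (mpow D)} \<and> Y \<in> {matrix_inv P}}"
    by (intro bounded_matrix_mult_set) auto
  then show ?thesis
    by (rule bounded_subset) (auto simp: A mpow_conjugate[OF P])
qed

lemma tendsto_matrix_mult:
  fixes X :: "'b \<Rightarrow> 'a::real_normed_algebra_1^'n^'m" and Y :: "'b \<Rightarrow> 'a^'p^'n"
  assumes "(X \<longlongrightarrow> a) F" "(Y \<longlongrightarrow> b) F"
  shows "((\<lambda>x. X x ** Y x) \<longlongrightarrow> a ** b) F"
  unfolding matrix_matrix_mult_def by (intro vec_tendstoI) (simp, intro tendsto_intros assms)

lemma tendsto_matrix_vector_mult:
  fixes X :: "'b \<Rightarrow> 'a::real_normed_algebra_1^'n^'m"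
  assumes "(X \<longlongrightarrow> a) F"
  shows "((\<lambda>x. X x *v v) \<longlongrightarrow> a *v v) F"
  unfolding matrix_vector_mult_def by (intro vec_tendstoI) (simp, intro tendsto_intros assms)

lemma tendsto_det:
  fixes X :: "'b \<Rightarrow> 'a::{real_normed_field}^'n^'n"
  assumes "(X \<longlongrightarrow> a) F"
  shows "((\<lambda>x. det (X x)) \<longlongrightarrow> det a) F"
  unfolding det_def by (intro tendsto_intros assms)

lemma strict_mono_sparse_subseq:
  fixes r :: "nat \<Rightarrow> nat"
  assumes "strict_mono r"
  obtains s where "strict_mono s" "\<And>k. 2 * r (s k) < r (s (Suc k))"
proof -
  define s where "s = rec_nat 0 (\<lambda>_ j. 2 * r j + 1)"
  have s_Suc: "s (Suc k) = 2 * r (s k) + 1" for k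
    by (simp add: s_def)
  show ?thesis
  proof (rule that[of s])
    have "s k < s (Suc k)" for k
      using seq_suble[OF assms, of "s k"] by (simp add: s_Suc)
    then show "strict_mono s"
      by (simp add: strict_mono_Suc_iff)
    show "2 * r (s k) < r (s (Suc k))" for k
      using seq_suble[OF assms, of "s (Suc k)"] by (simp add: s_Suc)
  qed
qed

lemma invertible_limit_mpow:
  fixes A :: "complex^'n^'n"
  assumes "(\<lambda>k. mpow A (n k)) \<longlonglongrightarrow> E" and "cmod (det A) = 1"
  shows "invertible E"
proof -
  have "(\<lambda>k. cmod (det (mpow A (n k)))) \<longlonglongrightarrow> cmod (det E)"
    by (intro tendsto_norm tendsto_det assms(1))
  then have "cmod (det E) = 1"
    using assms(2) by (simp add: det_mpow norm_power LIMSEQ_const_iff)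
  then show ?thesis
    by (auto simp: invertible_det_nz)
qed

lemma recurrent_mpow:
  fixes A :: "complex^'n^'n"
  assumes bounded: "bounded (range (mpow A))" and det: "cmod (det A) = 1"
  shows "\<exists>d. strict_mono d \<and> (\<lambda>k. mpow A (d k)) \<longlonglongrightarrow> mat 1"
proof -
  obtain E r where r: "strict_mono r" and rE: "(mpow A \<circ> r) \<longlonglongrightarrow> E"
    using bounded_imp_convergent_subsequence[OF bounded] by blast
  obtain s where s: "strict_mono s" and grows: "\<And>k. 2 * r (s k) < r (s (Suc k))"
    using strict_mono_sparse_subseq[OF r] by blast
  define n where "n k = r (s k)" for k
  have n_grows: "2 * n k < n (Suc k)" for k
    using grows by (simp add: n_def)
  have nE: "(\<lambda>k. mpow A (n k)) \<longlonglongrightarrow> E"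
    using LIMSEQ_subseq_LIMSEQ[OF rE s] by (simp add: n_def o_def)
  define d where "d k = n (Suc k) - n k" for k
  have "strict_mono d"
    unfolding strict_mono_Suc_iff
  proof
    fix k show "d k < d (Suc k)"
      using n_grows[of k] n_grows[of "Suc k"] by (simp add: d_def)
  qed
  have d_split: "mpow A (d k) ** mpow A (n k) = mpow A (n (Suc k))" for k
    using n_grows[of k] by (simp add: d_def flip: mpow_add)
  have "bounded (range (\<lambda>k. mpow A (d k)))"
    by (rule bounded_subset[OF bounded]) auto
  then obtain F t where t: "strict_mono t" and tF: "((\<lambda>k. mpow A (d k)) \<circ> t) \<longlonglongrightarrow> F"
    using bounded_imp_convergent_subsequence by blast
  have "(\<lambda>k. mpow A (d (t k)) ** mpow A (n (t k))) \<longlonglongrightarrow> F ** E"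
    using tF LIMSEQ_subseq_LIMSEQ[OF nE t] by (intro tendsto_matrix_mult) (simp_all add: o_def)
  moreover have "(\<lambda>k. mpow A (d (t k)) ** mpow A (n (t k))) \<longlonglongrightarrow> E"
    using LIMSEQ_subseq_LIMSEQ[OF nE, of "Suc \<circ> t"] t by (simp add: o_def d_split strict_mono_def)
  ultimately have FE: "F ** E = E"
    by (rule LIMSEQ_unique)
  have E: "invertible E"
    using nE det by (rule invertible_limit_mpow)
  have "F = (F ** E) ** matrix_inv E"
    by (simp flip: matrix_mul_assoc add: matrix_inv_right[OF E])
  then have "F = mat 1"
    by (simp add: FE matrix_inv_right[OF E])
  then show ?thesis
    using tF \<open>strict_mono d\<close> t by (auto simp: o_def intro!: exI[of _ "d \<circ> t"] strict_mono_o)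
qed

lemma power_eq_one_power: "c ^ n = 1 \<Longrightarrow> (c ^ m) ^ n = (1::'a::comm_monoid_mult)"
  by (metis power_mult mult.commute power_one)

lemma mem_psl_class_iff: "N \<in> psl_class M \<longleftrightarrow> (\<exists>c. c ^ CARD('n) = 1 \<and> N = mat c ** (M::complex^'n^'n))"
  unfolding psl_class_def by blast

lemma psl_class_self: "M \<in> psl_class M"
  unfolding mem_psl_class_iff by (auto intro!: exI[of _ 1])

lemma psl_class_mat_mult:
  assumes c: "c ^ CARD('n) = 1"
  shows "psl_class (mat c ** M) = psl_class (M::complex^'n^'n)"
proof (intro set_eqI iffI)
  fix N assume "N \<in> psl_class (mat c ** M)"
  then obtain d where "d ^ CARD('n) = 1" "N = mat (d * c) ** M"
    by (auto simp: mem_psl_class_iff matrix_mul_assoc mat_mult_mat)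
  then show "N \<in> psl_class M"
    using c unfolding mem_psl_class_iff by (auto simp: power_mult_distrib intro!: exI[of _ "d * c"])
next
  fix N assume "N \<in> psl_class M"
  then obtain d where d: "d ^ CARD('n) = 1" "N = mat d ** M"
    by (auto simp: mem_psl_class_iff)
  have "c \<noteq> 0"
    using c by (cases "c = 0") (simp_all add: zero_power)
  then have "N = mat (d / c) ** (mat c ** M)"
    by (simp add: d(2) matrix_mul_assoc mat_mult_mat)
  moreover have "(d / c) ^ CARD('n) = 1"
    using c d(1) by (simp add: power_divide)
  ultimately show "N \<in> psl_class (mat c ** M)"
    unfolding mem_psl_class_iff by blast
qed

lemma psl_class_mpow_mat_mult:
  assumes "c ^ CARD('n) = 1"
  shows "psl_class (mpow (mat c ** A) m) = psl_class (mpow (A::complex^'n^'n) m)"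
  using assms by (simp add: mpow_mat_mult psl_class_mat_mult power_eq_one_power)

lemma psl_lift_psl_class:
  assumes "det A = 1"
  obtains c where "c ^ CARD('n) = 1" "psl_lift (psl_class A) = mat c ** (A::complex^'n^'n)"
proof -
  have "det (psl_lift (psl_class A)) = 1 \<and> psl_class (psl_lift (psl_class A)) = psl_class A"
    unfolding psl_lift_def by (rule someI[of _ A]) (simp add: assms)
  then have "psl_lift (psl_class A) \<in> psl_class A"
    by (metis psl_class_self)
  then show ?thesis
    using that by (auto simp: mem_psl_class_iff)
qed

lemma psl_class_eq_psl_one:
  fixes M :: "complex^'n^'n"
  assumes "psl_class M = psl_one"
  obtains c where "c ^ CARD('n) = 1" "M = mat c"
  using psl_class_self[of M] assms by (auto simp: psl_one_def mem_psl_class_iff)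

lemma psl_class_mpow_mod:
  assumes "mpow L k = mat e" "e ^ CARD('n) = 1"
  shows "psl_class (mpow L m) = psl_class (mpow (L::complex^'n^'n) (m mod k))"
proof -
  have "mpow L m = mpow L (m mod k) ** mpow (mpow L k) (m div k)"
    by (metis mpow_add mpow_mult mod_mult_div_eq)
  also have "\<dots> = mat (e ^ (m div k)) ** mpow L (m mod k)"
    by (simp add: assms(1) mpow_mat matrix_mult_mat_commute)
  finally show ?thesis
    using assms(2) by (simp add: psl_class_mat_mult power_eq_one_power)
qed

lemma finite_cyclic_subgroup:
  fixes \<gamma> :: "(complex^'n^'n) set"
  assumes "psl_finite_order \<gamma>"
  shows "finite (cyclic_subgroup \<gamma>)"
proof -
  define L where "L = psl_lift \<gamma>"
  obtain k where k: "k > 0" "psl_class (mpow L k) = psl_one"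
    using assms unfolding psl_finite_order_def L_def by blast
  obtain e where e: "e ^ CARD('n) = 1" "mpow L k = mat e"
    using psl_class_eq_psl_one[OF k(2)] by metis
  have "e \<noteq> 0"
    using e(1) by (cases "e = 0") (simp_all add: zero_power)
  \<comment> \<open>\<open>L^k = e I\<close> is scalar, so \<open>L\<close> is inverted by a multiple of \<open>L^(k-1)\<close>.\<close>
  define X where "X = mat (1 / e) ** mpow L (k - 1)"
  have Lk: "L ** mpow L (k - 1) = mpow L k" "mpow L (k - 1) ** L = mpow L k"
    using k(1) mpow.simps(2)[of L "k - 1"] mpow_add[of L "k - 1" 1] by simp_all
  have "L ** X = mat (1 / e) ** (L ** mpow L (k - 1))"
    by (simp only: X_def matrix_mul_assoc matrix_mult_mat_commute[of L])
  also have "\<dots> = mat 1"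
    unfolding Lk e(2) mat_mult_mat using \<open>e \<noteq> 0\<close> by simp
  finally have "L ** X = mat 1" .
  moreover have "X ** L = mat 1"
    unfolding X_def matrix_mul_assoc[symmetric] Lk e(2) mat_mult_mat using \<open>e \<noteq> 0\<close> by simp
  ultimately have inv_L: "matrix_inv L = X"
    by (rule matrix_inv_unique)
  have "(1 / e) ^ CARD('n) = 1"
    using e(1) by (simp add: power_one_over)
  then have inv_pow: "psl_class (mpow (matrix_inv L) j) = psl_class (mpow L ((k - 1) * j))" for j
    by (simp add: inv_L X_def mpow_mat_mult psl_class_mat_mult mpow_mult power_eq_one_power)
  have "cyclic_subgroup \<gamma> \<subseteq> range (\<lambda>m. psl_class (mpow L m))"
    unfolding cyclic_subgroup_def psl_zpow_def L_def[symmetric] by (auto simp: mzpow_def inv_pow)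
  also have "\<dots> \<subseteq> (\<lambda>r. psl_class (mpow L r)) ` {..<k}"
  proof (rule image_subsetI)
    fix m show "psl_class (mpow L m) \<in> (\<lambda>r. psl_class (mpow L r)) ` {..<k}"
      using psl_class_mpow_mod[OF e(2,1), of m] k(1) by auto
  qed
  finally show ?thesis
    by (rule finite_subset) simp
qed

lemma inj_psl_class_mpow:
  fixes A :: "complex^'n^'n"
  assumes "invertible A" and "\<And>m. m > 0 \<Longrightarrow> psl_class (mpow A m) \<noteq> psl_one"
  shows "inj (\<lambda>m. psl_class (mpow A m))"
proof (rule linorder_injI)
  fix i j :: nat assume "i < j"
  show "psl_class (mpow A i) \<noteq> psl_class (mpow A j)"
  proof
    assume "psl_class (mpow A i) = psl_class (mpow A j)"
    then have "mpow A j \<in> psl_class (mpow A i)"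
      by (simp add: psl_class_self)
    moreover have "mpow A j = mpow A (j - i) ** mpow A i"
      using \<open>i < j\<close> by (simp flip: mpow_add)
    ultimately obtain c where c: "c ^ CARD('n) = 1" "mpow A (j - i) ** mpow A i = mat c ** mpow A i"
      by (auto simp: mem_psl_class_iff)
    have "invertible (mpow A i)"
      using assms(1) by (simp add: invertible_det_nz det_mpow)
    then have "mpow A (j - i) = mat c"
      using c(2) by (metis matrix_inv_right matrix_mul_assoc matrix_mul_rid)
    then have "psl_class (mpow A (j - i)) = psl_one"
      using psl_class_mat_mult[OF c(1), of "mat 1"] by (simp add: psl_one_def)
    then show False
      using assms(2) \<open>i < j\<close> by simp
  qed
qed

lemma istopology_proj:
  "istopology (\<lambda>U::(complex^'n) set set. U \<subseteq> projspace \<and> open {v. v \<noteq> 0 \<and> cline v \<in> U})"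
proof -
  have "{v. v \<noteq> 0 \<and> cline v \<in> S \<inter> T} = {v. v \<noteq> 0 \<and> cline v \<in> S} \<inter> {v. v \<noteq> 0 \<and> cline v \<in> T}"
    for S T :: "(complex^'n) set set"
    by auto
  moreover have "{v. v \<noteq> 0 \<and> cline v \<in> \<Union>\<K>} = (\<Union>U\<in>\<K>. {v. v \<noteq> 0 \<and> cline v \<in> U})"
    for \<K> :: "(complex^'n) set set set"
    by auto
  ultimately show ?thesis
    unfolding istopology_def by (auto intro: open_Int open_Union)
qed

lemma openin_proj_topology:
  "openin proj_topology U \<longleftrightarrow> U \<subseteq> projspace \<and> open {v. v \<noteq> 0 \<and> cline v \<in> U}"
  unfolding proj_topology_def by (subst topology_inverse'[OF istopology_proj]) (rule refl)

lemma topspace_proj_topology: "topspace proj_topology = projspace"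
proof -
  have punctured: "{v. v \<noteq> 0 \<and> cline v \<in> projspace} = - {0::complex^'n}"
    unfolding projspace_def by auto
  have "openin proj_topology (projspace :: (complex^'n) set set)"
    unfolding openin_proj_topology punctured by (simp add: open_Compl)
  then show ?thesis
    unfolding topspace_def using openin_proj_topology by auto
qed

lemma limitin_proj_topology_cline:
  assumes "v \<noteq> 0" and "w \<longlonglongrightarrow> v"
  shows "limitin proj_topology (\<lambda>k. cline (w k)) (cline v) sequentially"
  unfolding limitin_def
proof (intro conjI allI impI)
  show "cline v \<in> topspace proj_topology"
    unfolding topspace_proj_topology projspace_def using assms(1) by auto
next
  fix U assume "openin proj_topology U \<and> cline v \<in> U"
  then have "open {v. v \<noteq> 0 \<and> cline v \<in> U}" "v \<in> {v. v \<noteq> 0 \<and> cline v \<in> U}"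
    using assms(1) unfolding openin_proj_topology by auto
  then have "\<forall>\<^sub>F k in sequentially. w k \<in> {v. v \<noteq> 0 \<and> cline v \<in> U}"
    using assms(2) topological_tendstoD by blast
  then show "\<forall>\<^sub>F k in sequentially. cline (w k) \<in> U"
    by (rule eventually_mono) simp
qed

lemma cline_scale: "c \<noteq> 0 \<Longrightarrow> cline (c *s v) = cline v"
  unfolding cline_def
  by (auto simp: vector_smult_assoc) (metis divide_inverse_commute nonzero_divide_eq_eq vector_smult_assoc)

lemma image_matrix_vector_mult_cline: "(\<lambda>w. M *v w) ` cline v = cline (M *v v)"
  unfolding cline_def by (auto simp: vector_scalar_commute image_iff) (metis vector_scalar_commute)

lemma psl_act_psl_class_cline: "psl_act (psl_class M) (cline v) = cline ((M::complex^'n^'n) *v v)"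
proof -
  have "(SOME N. N \<in> psl_class M) \<in> psl_class M"
    by (rule someI) (rule psl_class_self)
  then obtain c where c: "c ^ CARD('n) = 1" "(SOME N. N \<in> psl_class M) = mat c ** M"
    by (auto simp: mem_psl_class_iff)
  have "c \<noteq> 0"
    using c(1) by (cases "c = 0") (simp_all add: zero_power)
  have "psl_act (psl_class M) (cline v) = cline ((mat c ** M) *v v)"
    unfolding psl_act_def c(2) by (rule image_matrix_vector_mult_cline)
  also have "\<dots> = cline (c *s (M *v v))"
    by (simp add: mat_matrix_vector_mult flip: matrix_vector_mul_assoc)
  finally show ?thesis
    using cline_scale[OF \<open>c \<noteq> 0\<close>] by simp
qed

lemma cluster_points_finite:
  assumes "finite \<Gamma>"
  shows "cluster_points \<Gamma> K = {}"
proof -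
  have "\<not> inj g" if "\<And>m. g m \<in> \<Gamma>" for g :: "nat \<Rightarrow> _"
    using finite_subset[of "range g", OF _ assms] that finite_imageD[of g UNIV] by auto
  then show ?thesis
    unfolding cluster_points_def by blast
qed

lemma Kulkarni_limit_set_finite:
  assumes "finite \<Gamma>"
  shows "Kulkarni_limit_set \<Gamma> = {}"
proof -
  have union_empty: "\<Union>{cluster_points \<Gamma> K | K. P K} = {}" for P
    using cluster_points_finite[OF assms] by blast
  show ?thesis
    unfolding Kulkarni_limit_set_def Lambda_set_def L2_set_def union_empty
    by (simp add: cluster_points_finite[OF assms])
qed

lemma mem_cluster_points_self:
  fixes M :: "nat \<Rightarrow> complex^'n^'n"
  assumes "M \<longlonglongrightarrow> mat 1" "inj (\<lambda>k. psl_class (M k))" "\<And>k. psl_class (M k) \<in> \<Gamma>"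
    and "z \<in> projspace"
  shows "z \<in> cluster_points \<Gamma> {z}"
proof -
  obtain v where v: "v \<noteq> 0" "z = cline v"
    using assms(4) unfolding projspace_def by blast
  have "(\<lambda>k. M k *v v) \<longlonglongrightarrow> v"
    using tendsto_matrix_vector_mult[OF assms(1)] by simp
  then have "limitin proj_topology (\<lambda>k. psl_act (psl_class (M k)) z) z sequentially"
    using limitin_proj_topology_cline[OF v(1)] by (simp add: v(2) psl_act_psl_class_cline)
  then show ?thesis
    unfolding cluster_points_def using assms(2,3)
    by (intro CollectI exI[of _ "\<lambda>k. psl_class (M k)"] exI[of _ "\<lambda>_. z"]) auto
qed

lemma Kulkarni_limit_set_eq_projspace:
  fixes M :: "nat \<Rightarrow> complex^'n^'n"
  assumes "M \<longlonglongrightarrow> mat 1" "inj (\<lambda>k. psl_class (M k))" "\<And>k. psl_class (M k) \<in> \<Gamma>"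
  shows "Kulkarni_limit_set \<Gamma> = projspace"
proof (rule antisym)
  have closure_subset: "proj_topology closure_of S \<subseteq> projspace" for S :: "(complex^'n) set set"
    using closure_of_subset_topspace[of proj_topology S] by (simp add: topspace_proj_topology)
  then show "Kulkarni_limit_set \<Gamma> \<subseteq> projspace"
    unfolding Kulkarni_limit_set_def Lambda_set_def L2_set_def by (intro Un_least)
  have "projspace \<subseteq> topspace proj_topology \<inter> (\<Union>z\<in>projspace. cluster_points \<Gamma> {z})"
    using mem_cluster_points_self[OF assms] by (auto simp: topspace_proj_topology)
  then have "projspace \<subseteq> Lambda_set \<Gamma>"
    unfolding Lambda_set_def using closure_of_subset_Int by (rule order.trans)
  then show "projspace \<subseteq> Kulkarni_limit_set \<Gamma>"
    unfolding Kulkarni_limit_set_def by blast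
qed

theorem mainTheorem10:
  fixes \<gamma> :: "(complex^'n^'n) set" and A :: "complex^'n^'n"
  assumes "CARD('n) \<ge> 2"
    and "\<gamma> \<in> PSL"
    and "det A = 1" and "psl_class A = \<gamma>"
    and "mat_diagonalizable A"
    and "\<forall>c. mat_eigenvalue A c \<longrightarrow> cmod c = 1"
  shows "(psl_finite_order \<gamma> \<longrightarrow> Kulkarni_limit_set (cyclic_subgroup \<gamma>) = {})
       \<and> (\<not> psl_finite_order \<gamma> \<longrightarrow> Kulkarni_limit_set (cyclic_subgroup \<gamma>) = projspace)"
proof (intro conjI impI)
  assume "psl_finite_order \<gamma>"
  then show "Kulkarni_limit_set (cyclic_subgroup \<gamma>) = {}"
    by (intro Kulkarni_limit_set_finite finite_cyclic_subgroup)
next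
  assume infinite_order: "\<not> psl_finite_order \<gamma>"
  obtain c where c: "c ^ CARD('n) = 1" "psl_lift \<gamma> = mat c ** A"
    by (rule psl_lift_psl_class[OF assms(3), unfolded assms(4)])
  have lift_pow: "psl_class (mpow (psl_lift \<gamma>) m) = psl_class (mpow A m)" for m
    by (simp add: c psl_class_mpow_mat_mult)
  have "psl_class (mpow A m) \<noteq> psl_one" if "m > 0" for m
    using infinite_order that unfolding psl_finite_order_def lift_pow by blast
  then have inj: "inj (\<lambda>m. psl_class (mpow A m))"
    using assms(3) by (intro inj_psl_class_mpow) (simp_all add: invertible_det_nz)
  have "psl_zpow \<gamma> (int m) = psl_class (mpow A m)" for m
    by (simp add: psl_zpow_def mzpow_def lift_pow)
  then have mem: "psl_class (mpow A m) \<in> cyclic_subgroup \<gamma>" for m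
    unfolding cyclic_subgroup_def by blast
  obtain d where d: "strict_mono d" "(\<lambda>k. mpow A (d k)) \<longlonglongrightarrow> mat 1"
    using recurrent_mpow[OF bounded_range_mpow[OF assms(5,6)]] assms(3) by auto
  show "Kulkarni_limit_set (cyclic_subgroup \<gamma>) = projspace"
    using d mem inj_compose[OF inj strict_mono_imp_inj_on[OF d(1)]]
    by (intro Kulkarni_limit_set_eq_projspace[of "\<lambda>k. mpow A (d k)"]) (simp_all add: o_def)
qed

end
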